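(* Let $(Z,Z_{ac})$ be an accretive matrix-ordered vector space. Then there exists a $*$-closure $((V,V_{ac}),\phi)$ of $(Z,Z_{ac})$. Moreover, if $((V',V'_{ac}),\psi)$ is another $*$-closure of $(Z,Z_{ac})$, then there exists a real-complete order isomorphism $j:V\to V'$.
   Context: For a complex vector space $Z$, $M_n(Z)$ is the space of $n\times n$ matrices over $Z$. A cone is a set $C$ with $C+C\subseteq C$, $tC\subseteq C$ ($t\ge0$). A matrix cone is a sequence of cones $C_n\subseteq M_n(Z)$ with $X^*C_nX\subseteq C_k$ for all scalar $X\in M_{n,k}$; it is $\mathbb{C}$-proper if $C_1\cap-C_1\cap iC_1\cap-iC_1=\{0\}$, and then $(Z,Z_{ac})$, $Z_{ac}=\{Z_{ac}^n\}$, is an accretive matrix-ordered vector space, with $Z_{sa}^n=iZ_{ac}^n\cap-iZ_{ac}^n$ and $Z_+^n=Z_{sa}^n\cap Z_{ac}^n$. It is self-adjoint if $Z=\operatorname{span}_{\mathbb{C}}Z_{sa}^1$. In that case, each $M_n(Z)$ carries a unique conjugate-linear involution $*$ fixing every element of $Z_{sa}^n$, and it is given by $[z_{kl}]^*=[z_{lk}^*]$. A linear map $\phi$ is real-completely positive if $\phi^{(n)}(Z_{ac}^n)\subseteq W_{ac}^n$ for all $n$ ($\phi^{(n)}$ = entrywise application); a real-complete order embedding if injective and both $\phi$ and $\phi^{-1}$ (on the range) are real-completely positive; a real-complete order isomorphism if moreover surjective. A $*$-closure of $(Z,Z_{ac})$ is a pair $((V,V_{ac}),\phi)$ with $(V,V_{ac})$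 a self-adjoint accretive matrix-ordered vector space, $\phi:Z\to V$ a real-complete order embedding, and $V=\phi(Z)+\phi(Z)^*$ with respect to the involution of $V$. *)

theory Defs
  imports "HOL-Analysis.Analysis"
begin

text \<open>Complex vector spaces are given by an abelian group type together with a
scalar multiplication s :: complex => 'v => 'v satisfying vector_space s
(HOL.Vector_Spaces).  A space is a carrier V (a subspace) of such a type.\<close>

definition mats :: "nat \<Rightarrow> 'v::ab_group_add set \<Rightarrow> (nat \<Rightarrow> nat \<Rightarrow> 'v) set" where
  "mats n V = {A. (\<forall>i<n. \<forall>j<n. A i j \<in> V) \<and> (\<forall>i j. \<not> (i < n \<and> j < n) \<longrightarrow> A i j = 0)}"

definition smat :: "(complex \<Rightarrow> 'v \<Rightarrow> 'v) \<Rightarrow> complex \<Rightarrow> (nat \<Rightarrow> nat \<Rightarrow> 'v) \<Rightarrow> (nat \<Rightarrow> nat \<Rightarrow> 'v)" where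
  "smat s c A = (\<lambda>i j. s c (A i j))"

definition sset :: "(complex \<Rightarrow> 'v \<Rightarrow> 'v) \<Rightarrow> complex \<Rightarrow> (nat \<Rightarrow> nat \<Rightarrow> 'v) set \<Rightarrow> (nat \<Rightarrow> nat \<Rightarrow> 'v) set" where
  "sset s c S = smat s c ` S"

definition is_cone :: "(complex \<Rightarrow> 'v::ab_group_add \<Rightarrow> 'v) \<Rightarrow> (nat \<Rightarrow> nat \<Rightarrow> 'v) set \<Rightarrow> bool" where
  "is_cone s C \<longleftrightarrow> (\<forall>A\<in>C. \<forall>B\<in>C. (\<lambda>i j. A i j + B i j) \<in> C) \<and>
                    (\<forall>t::real. t \<ge> 0 \<longrightarrow> (\<forall>A\<in>C. smat s (complex_of_real t) A \<in> C))"

text \<open>X^* A X for A in M_n(V) and a scalar n x k matrix X (result in M_k(V)).\<close>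
definition congr :: "(complex \<Rightarrow> 'v::ab_group_add \<Rightarrow> 'v) \<Rightarrow> nat \<Rightarrow> nat \<Rightarrow> (nat \<Rightarrow> nat \<Rightarrow> complex)
    \<Rightarrow> (nat \<Rightarrow> nat \<Rightarrow> 'v) \<Rightarrow> (nat \<Rightarrow> nat \<Rightarrow> 'v)" where
  "congr s n k X A = (\<lambda>a b. if a < k \<and> b < k
      then (\<Sum>i<n. \<Sum>j<n. s (cnj (X i a) * X j b) (A i j)) else 0)"

definition matrix_cone :: "(complex \<Rightarrow> 'v::ab_group_add \<Rightarrow> 'v) \<Rightarrow> 'v set \<Rightarrow> (nat \<Rightarrow> (nat \<Rightarrow> nat \<Rightarrow> 'v) set) \<Rightarrow> bool" where
  "matrix_cone s V C \<longleftrightarrow>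
     (\<forall>n>0. C n \<subseteq> mats n V \<and> is_cone s (C n)) \<and>
     (\<forall>n>0. \<forall>k>0. \<forall>X. \<forall>A\<in>C n. congr s n k X A \<in> C k)"

definition C_proper :: "(complex \<Rightarrow> 'v::ab_group_add \<Rightarrow> 'v) \<Rightarrow> (nat \<Rightarrow> (nat \<Rightarrow> nat \<Rightarrow> 'v) set) \<Rightarrow> bool" where
  "C_proper s C \<longleftrightarrow>
     C 1 \<inter> sset s (-1) (C 1) \<inter> sset s \<i> (C 1) \<inter> sset s (-\<i>) (C 1) = {(\<lambda>i j. 0)}"

definition amovs :: "(complex \<Rightarrow> 'v::ab_group_add \<Rightarrow> 'v) \<Rightarrow> 'v set \<Rightarrow> (nat \<Rightarrow> (nat \<Rightarrow> nat \<Rightarrow> 'v) set) \<Rightarrow> bool" where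
  "amovs s V C \<longleftrightarrow> vector_space s \<and> module.subspace s V \<and> matrix_cone s V C \<and> C_proper s C"

definition sa_part :: "(complex \<Rightarrow> 'v::ab_group_add \<Rightarrow> 'v) \<Rightarrow> (nat \<Rightarrow> (nat \<Rightarrow> nat \<Rightarrow> 'v) set) \<Rightarrow> nat \<Rightarrow> (nat \<Rightarrow> nat \<Rightarrow> 'v) set" where
  "sa_part s C n = sset s \<i> (C n) \<inter> sset s (-\<i>) (C n)"

definition self_adjoint :: "(complex \<Rightarrow> 'v::ab_group_add \<Rightarrow> 'v) \<Rightarrow> 'v set \<Rightarrow> (nat \<Rightarrow> (nat \<Rightarrow> nat \<Rightarrow> 'v) set) \<Rightarrow> bool" where
  "self_adjoint s V C \<longleftrightarrow> V = module.span s {A 0 0 | A. A \<in> sa_part s C 1}"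

definition linear_on :: "(complex \<Rightarrow> 'v::ab_group_add \<Rightarrow> 'v) \<Rightarrow> (complex \<Rightarrow> 'w::ab_group_add \<Rightarrow> 'w) \<Rightarrow> 'v set \<Rightarrow> ('v \<Rightarrow> 'w) \<Rightarrow> bool" where
  "linear_on s1 s2 V f \<longleftrightarrow> (\<forall>x\<in>V. \<forall>y\<in>V. f (x + y) = f x + f y) \<and> (\<forall>c. \<forall>x\<in>V. f (s1 c x) = s2 c (f x))"

definition conj_linear_on :: "(complex \<Rightarrow> 'v::ab_group_add \<Rightarrow> 'v) \<Rightarrow> 'v set \<Rightarrow> ('v \<Rightarrow> 'v) \<Rightarrow> bool" where
  "conj_linear_on s V f \<longleftrightarrow> (\<forall>x\<in>V. \<forall>y\<in>V. f (x + y) = f x + f y) \<and> (\<forall>c. \<forall>x\<in>V. f (s c x) = s (cnj c) (f x))"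

definition map_mat :: "('v \<Rightarrow> 'w) \<Rightarrow> (nat \<Rightarrow> nat \<Rightarrow> 'v) \<Rightarrow> (nat \<Rightarrow> nat \<Rightarrow> 'w)" where
  "map_mat f A = (\<lambda>i j. f (A i j))"

definition real_cp :: "(nat \<Rightarrow> (nat \<Rightarrow> nat \<Rightarrow> 'v) set) \<Rightarrow> (nat \<Rightarrow> (nat \<Rightarrow> nat \<Rightarrow> 'w) set) \<Rightarrow> ('v \<Rightarrow> 'w) \<Rightarrow> bool" where
  "real_cp C D f \<longleftrightarrow> (\<forall>n>0. \<forall>A\<in>C n. map_mat f A \<in> D n)"

text \<open>Real-complete order embedding: linear, injective, real-completely positive, with
real-completely positive inverse on the range (range carrying the cones W_ac^n \<inter> M_n(f(V))).\<close>
definition rc_embedding :: "(complex \<Rightarrow> 'v::ab_group_add \<Rightarrow> 'v) \<Rightarrow> 'v set \<Rightarrow> (nat \<Rightarrow> (nat \<Rightarrow> nat \<Rightarrow> 'v) set)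
    \<Rightarrow> (complex \<Rightarrow> 'w::ab_group_add \<Rightarrow> 'w) \<Rightarrow> 'w set \<Rightarrow> (nat \<Rightarrow> (nat \<Rightarrow> nat \<Rightarrow> 'w) set) \<Rightarrow> ('v \<Rightarrow> 'w) \<Rightarrow> bool" where
  "rc_embedding s1 V C s2 W D f \<longleftrightarrow>
     linear_on s1 s2 V f \<and> f ` V \<subseteq> W \<and> inj_on f V \<and> real_cp C D f \<and>
     (\<forall>n>0. \<forall>A\<in>mats n V. map_mat f A \<in> D n \<longrightarrow> A \<in> C n)"

definition rc_isomorphism :: "(complex \<Rightarrow> 'v::ab_group_add \<Rightarrow> 'v) \<Rightarrow> 'v set \<Rightarrow> (nat \<Rightarrow> (nat \<Rightarrow> nat \<Rightarrow> 'v) set)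
    \<Rightarrow> (complex \<Rightarrow> 'w::ab_group_add \<Rightarrow> 'w) \<Rightarrow> 'w set \<Rightarrow> (nat \<Rightarrow> (nat \<Rightarrow> nat \<Rightarrow> 'w) set) \<Rightarrow> ('v \<Rightarrow> 'w) \<Rightarrow> bool" where
  "rc_isomorphism s1 V C s2 W D f \<longleftrightarrow> rc_embedding s1 V C s2 W D f \<and> f ` V = W"

text \<open>*-closure ((V,V_ac),phi) of (Z,Z_ac).  The involution of the self-adjoint space V
is the (unique, since V is spanned by V_sa^1) conjugate-linear map fixing V_sa^1.\<close>
definition star_closure :: "(complex \<Rightarrow> 'z::ab_group_add \<Rightarrow> 'z) \<Rightarrow> 'z set \<Rightarrow> (nat \<Rightarrow> (nat \<Rightarrow> nat \<Rightarrow> 'z) set)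
    \<Rightarrow> (complex \<Rightarrow> 'v::ab_group_add \<Rightarrow> 'v) \<Rightarrow> 'v set \<Rightarrow> (nat \<Rightarrow> (nat \<Rightarrow> nat \<Rightarrow> 'v) set) \<Rightarrow> ('z \<Rightarrow> 'v) \<Rightarrow> bool" where
  "star_closure sZ Z CZ sV V CV phi \<longleftrightarrow>
     amovs sV V CV \<and> self_adjoint sV V CV \<and> rc_embedding sZ Z CZ sV V CV phi \<and>
     (\<exists>star. conj_linear_on sV V star \<and> (\<forall>A\<in>sa_part sV CV 1. star (A 0 0) = A 0 0) \<and>
        V = {phi a + star (phi b) | a b. a \<in> Z \<and> b \<in> Z})"

end

theory Submission
  imports Defs "HOL-Library.Function_Algebras"
begin

text \<open>
  Every element of a *-closure V of Z has the form phi a + (phi b)*, and the matrix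
  [phi a_kl + (phi b_kl)*] is accretive iff [a_kl + b_lk] is accretive in Z: the two differ by
  [(phi b_kl)* - phi b_lk], which together with its negative lies in the cone, because
  x* - x and i(x* + x) are skew (i times self-adjoint) for every x.  Hence two *-closures
  are real-completely order isomorphic via phi a + (phi b)* \<mapsto> psi a + (psi b)*; this is
  well defined because phi a + (phi b)* = 0 iff a + b and i(a - b) are skew in Z.
  Conversely, the quotient of Z \<times> Z by these null pairs, with cones given by the same
  condition on [a_kl + b_lk], is a *-closure.
\<close>

section \<open>Matrices with a single nonzero entry\<close>

lemma sum_apply: "(sum f I) x = (\<Sum>i\<in>I. f i x)"
  by (induction I rule: infinite_finite_induct) auto

definition single_entry :: "nat \<Rightarrow> nat \<Rightarrow> 'v::zero \<Rightarrow> nat \<Rightarrow> nat \<Rightarrow> 'v" where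
  "single_entry k l x = (\<lambda>i j. if i = k \<and> j = l then x else 0)"

abbreviation mat1 :: "'v::zero \<Rightarrow> nat \<Rightarrow> nat \<Rightarrow> 'v" where
  "mat1 \<equiv> single_entry 0 0"

lemma single_entry_add: "single_entry k l (x + y) = single_entry k l x + single_entry k l (y::'v::monoid_add)"
  by (auto simp: single_entry_def fun_eq_iff)

lemma single_entry_0 [simp]: "single_entry k l 0 = 0"
  by (auto simp: single_entry_def fun_eq_iff)

lemma mats_1_eq_mat1: "A \<in> mats 1 V \<Longrightarrow> A = mat1 (A 0 0)"
  by (auto simp: mats_def single_entry_def fun_eq_iff)

lemma sum_single_entries:
  "(\<Sum>k<n. \<Sum>l<n. single_entry k l (f k l)) =
     (\<lambda>a b. if a < n \<and> b < n then f a b else (0::'v::comm_monoid_add))"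
proof (intro ext)
  fix a b
  have "(\<Sum>k<n. \<Sum>l<n. single_entry k l (f k l)) a b =
      (\<Sum>k<n. if a = k then (\<Sum>l<n. if b = l then f k l else 0) else 0)"
    unfolding sum_apply single_entry_def by (intro sum.cong) auto
  also have "\<dots> = (if a < n \<and> b < n then f a b else 0)"
    by (simp add: sum.delta')
  finally show "(\<Sum>k<n. \<Sum>l<n. single_entry k l (f k l)) a b = (if a < n \<and> b < n then f a b else 0)" .
qed

lemma sum_single_entry_pairs:
  "(\<Sum>k<n. \<Sum>l<n. single_entry k l (f k l) + single_entry l k (g k l)) =
     (\<lambda>a b. if a < n \<and> b < n then f a b + g b a else (0::'v::comm_monoid_add))"
proof -
  have "(\<Sum>k<n. \<Sum>l<n. single_entry l k (g k l)) = (\<Sum>l<n. \<Sum>k<n. single_entry l k (g k l))"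
    by (rule sum.swap)
  then show ?thesis
    by (simp add: sum.distrib sum_single_entries fun_eq_iff)
qed

lemma mem_sset_iff:
  assumes "vector_space s" and "c \<noteq> 0"
  shows "A \<in> sset s c S \<longleftrightarrow> smat s (inverse c) A \<in> S"
proof -
  interpret vector_space s by fact
  have "smat s (inverse c) (smat s c B) = B" for B
    using assms(2) by (simp add: smat_def)
  moreover have "smat s c (smat s (inverse c) A) = A"
    using assms(2) by (simp add: smat_def)
  ultimately show ?thesis
    by (metis image_eqI imageE sset_def)
qed

lemma smat_single_entry:
  assumes "vector_space s"
  shows "smat s c (single_entry k l x) = single_entry k l (s c x)"
proof -
  interpret vector_space s by fact
  show ?thesis by (auto simp: smat_def single_entry_def fun_eq_iff)
qed

lemma (in vector_space) exists_projection_along: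
  assumes "subspace N"
  shows "\<exists>P. Vector_Spaces.linear scale scale P \<and> (\<forall>x. x - P x \<in> N) \<and> (\<forall>x\<in>N. P x = 0)"
proof -
  interpret pair: vector_space_pair scale scale by unfold_locales
  obtain B where B: "B \<subseteq> N" "independent B" "N \<subseteq> span B"
    using maximal_independent_subset by blast
  define B' where "B' = extend_basis B"
  have B': "B \<subseteq> B'" "independent B'" "span B' = UNIV"
    unfolding B'_def using extend_basis_superset independent_extend_basis span_extend_basis B(2) by auto
  obtain P where P: "Vector_Spaces.linear scale scale P" "\<forall>x\<in>B'. P x = (if x \<in> B then 0 else x)"
    using pair.linear_independent_extend[OF B'(2), of "\<lambda>x. if x \<in> B then 0 else x"] by blast
  have lin_Q: "Vector_Spaces.linear scale scale (\<lambda>x. x - P x)"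
    using pair.linear_compose_sub[OF module_hom_ident P(1)] by simp
  have "x - P x \<in> N" for x
  proof -
    have "x \<in> span B'" using B'(3) by simp
    then show ?thesis
    proof (induction rule: span_induct)
      case base
      show ?case using pair.linear_subspace_vimage[OF lin_Q assms] by (simp add: vimage_def)
    next
      case (step x)
      then show ?case using P(2) B(1) subspace_0[OF assms] by (cases "x \<in> B") auto
    qed
  qed
  moreover have "P x = 0" if "x \<in> N" for x
  proof (rule pair.linear_eq_on[OF P(1) pair.linear_zero])
    show "x \<in> span B" using that B(3) by blast
  qed (use B'(1) P(2) in auto)
  ultimately show ?thesis using P(1) by blast
qed

section \<open>Accretive matrix-ordered spaces\<close>

definition pair_scale :: "(complex \<Rightarrow> 'z \<Rightarrow> 'z) \<Rightarrow> complex \<Rightarrow> 'z \<times> 'z \<Rightarrow> 'z \<times> 'z" where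
  "pair_scale s c p = (s c (fst p), s (cnj c) (snd p))"

lemma fst_pair_scale [simp]: "fst (pair_scale s c p) = s c (fst p)"
  and snd_pair_scale [simp]: "snd (pair_scale s c p) = s (cnj c) (snd p)"
  by (simp_all add: pair_scale_def)

lemma vector_space_pair_scale: "vector_space s \<Longrightarrow> vector_space (pair_scale s)"
  unfolding vector_space_def pair_scale_def
  by (auto simp: prod_eq_iff)

definition plus_transpose :: "(nat \<Rightarrow> nat \<Rightarrow> 'z \<times> 'z) \<Rightarrow> nat \<Rightarrow> nat \<Rightarrow> 'z::plus" where
  "plus_transpose X = (\<lambda>k l. fst (X k l) + snd (X l k))"

locale accretive_space =
  fixes s :: "complex \<Rightarrow> 'v::ab_group_add \<Rightarrow> 'v" and V :: "'v set"
    and C :: "nat \<Rightarrow> (nat \<Rightarrow> nat \<Rightarrow> 'v) set"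
  assumes amovs: "amovs s V C"
begin

sublocale vs: vector_space s
  using amovs by (simp add: amovs_def)

lemma subspace_V: "vs.subspace V"
  using amovs by (simp add: amovs_def)

lemma cone_subset_mats: "n > 0 \<Longrightarrow> C n \<subseteq> mats n V"
  using amovs by (simp add: amovs_def matrix_cone_def)

lemma cone_add: "n > 0 \<Longrightarrow> A \<in> C n \<Longrightarrow> B \<in> C n \<Longrightarrow> A + B \<in> C n"
  using amovs unfolding amovs_def matrix_cone_def is_cone_def plus_fun_def by blast

lemma cone_scale: "n > 0 \<Longrightarrow> t \<ge> 0 \<Longrightarrow> A \<in> C n \<Longrightarrow> smat s (complex_of_real t) A \<in> C n"
  using amovs unfolding amovs_def matrix_cone_def is_cone_def by blast

lemma cone_congr: "n > 0 \<Longrightarrow> k > 0 \<Longrightarrow> A \<in> C n \<Longrightarrow> congr s n k X A \<in> C k"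
  using amovs unfolding amovs_def matrix_cone_def by blast

lemma cone_zero: "n > 0 \<Longrightarrow> 0 \<in> C n"
proof -
  assume "n > 0"
  have "(\<lambda>i j. 0) \<in> C 1"
    using amovs unfolding amovs_def C_proper_def by blast
  from cone_congr[OF _ \<open>n > 0\<close> this, of "\<lambda>_ _. 0"]
  have "congr s 1 n (\<lambda>_ _. 0) (\<lambda>i j. 0) \<in> C n" by simp
  moreover have "congr s 1 n (\<lambda>_ _. 0) (\<lambda>i j. 0) = 0"
    by (simp add: congr_def fun_eq_iff)
  ultimately show "0 \<in> C n" by simp
qed

lemma cone_sum: "n > 0 \<Longrightarrow> (\<And>i. i \<in> I \<Longrightarrow> f i \<in> C n) \<Longrightarrow> sum f I \<in> C n"
  by (induction I rule: infinite_finite_induct) (auto intro: cone_zero cone_add)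

lemma cone_add_lineal_iff:
  assumes "n > 0" "D \<in> C n" "- D \<in> C n"
  shows "A + D \<in> C n \<longleftrightarrow> A \<in> C n"
  using cone_add[OF assms(1) _ assms(3), of "A + D"] cone_add[OF assms(1) _ assms(2), of A] by auto

lemma mat1_cone_in_V: "mat1 x \<in> C 1 \<Longrightarrow> x \<in> V"
  using cone_subset_mats[of 1] by (force simp: mats_def single_entry_def)

lemma proper_mat1: "x = 0 \<longleftrightarrow> (\<forall>c\<in>{1, -1, \<i>, -\<i>}. mat1 (s c x) \<in> C 1)"
proof
  assume "\<forall>c\<in>{1, -1, \<i>, -\<i>}. mat1 (s c x) \<in> C 1"
  then have "mat1 x \<in> C 1 \<inter> sset s (-1) (C 1) \<inter> sset s \<i> (C 1) \<inter> sset s (-\<i>) (C 1)"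
    by (simp add: mem_sset_iff[OF vs.vector_space_axioms] smat_single_entry[OF vs.vector_space_axioms])
  then have "mat1 x = (\<lambda>i j. 0)"
    using amovs unfolding amovs_def C_proper_def by blast
  then show "x = 0" by (metis single_entry_def)
qed (use cone_zero[of 1] in simp)

lemma congr_mat1:
  "congr s 1 n X (mat1 x) = (\<lambda>a b. if a < n \<and> b < n then s (cnj (X 0 a) * X 0 b) x else 0)"
  by (auto simp: congr_def single_entry_def fun_eq_iff)

lemma cone_single_entry_diag:
  assumes "k < n" "mat1 x \<in> C 1"
  shows "single_entry k k x \<in> C n"
proof -
  let ?X = "\<lambda>(i::nat) (b::nat). if b = k then (1::complex) else 0"
  have "congr s 1 n ?X (mat1 x) = single_entry k k x"
    unfolding congr_mat1 using assms(1) by (auto simp: single_entry_def fun_eq_iff)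
  then show ?thesis using cone_congr[of 1 n "mat1 x" ?X] assms by simp
qed

text \<open>These are exactly i times the self-adjoint elements.\<close>
definition skew where "skew = {x. mat1 x \<in> C 1 \<and> mat1 (- x) \<in> C 1}"

lemma skew_uminus: "x \<in> skew \<Longrightarrow> - x \<in> skew"
  by (auto simp: skew_def)

lemma skew_add: "x \<in> skew \<Longrightarrow> y \<in> skew \<Longrightarrow> x + y \<in> skew"
  unfolding skew_def mem_Collect_eq minus_add_distrib single_entry_add
  by (auto intro: cone_add)

lemma skew_0: "0 \<in> skew"
  using cone_zero[of 1] by (simp add: skew_def)

lemma skew_scale_real: "x \<in> skew \<Longrightarrow> s (complex_of_real t) x \<in> skew"
proof (cases "t \<ge> 0")
  case True
  then show "x \<in> skew \<Longrightarrow> ?thesis"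
    using cone_scale[of 1 t "mat1 x"] cone_scale[of 1 t "mat1 (- x)"]
    by (simp add: skew_def smat_single_entry[OF vs.vector_space_axioms] vs.scale_minus_right)
next
  case False
  then show "x \<in> skew \<Longrightarrow> ?thesis"
    using cone_scale[of 1 "- t" "mat1 x"] cone_scale[of 1 "- t" "mat1 (- x)"]
    by (simp add: skew_def smat_single_entry[OF vs.vector_space_axioms] vs.scale_minus_right vs.scale_minus_left)
qed

lemma skew_proper: "x \<in> skew \<Longrightarrow> s \<i> x \<in> skew \<Longrightarrow> x = 0"
  by (subst proper_mat1) (auto simp: skew_def vs.scale_minus_left)

text \<open>The congruence of [u] by the row e_k + e_l (resp. e_k + i e_l) fills the 2 x 2 block at k, l;
its diagonal part is cancelled by adding accretive diagonal matrices.\<close>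
lemma cone_single_entry_pair_skew:
  assumes "k < n" "l < n" "u \<in> skew"
  shows "single_entry k l u + single_entry l k u \<in> C n"
proof (cases "k = l")
  case True
  have "single_entry k k (u + u) \<in> C n"
    using assms skew_add[OF assms(3,3)] by (intro cone_single_entry_diag[OF assms(1)]) (auto simp: skew_def)
  then show ?thesis using True by (simp add: single_entry_add)
next
  case False
  let ?X = "\<lambda>(i::nat) (b::nat). (if b = k then (1::complex) else 0) + (if b = l then 1 else 0)"
  have u: "mat1 u \<in> C 1" and minus_u: "mat1 (- u) \<in> C 1" using assms by (auto simp: skew_def)
  have "congr s 1 n ?X (mat1 u) \<in> C n" using u assms by (intro cone_congr) auto
  with cone_single_entry_diag[OF assms(1) minus_u] cone_single_entry_diag[OF assms(2) minus_u]
  have "congr s 1 n ?X (mat1 u) + single_entry k k (- u) + single_entry l l (- u) \<in> C n"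
    using assms by (intro cone_add) auto
  moreover have "single_entry k l u + single_entry l k u =
      congr s 1 n ?X (mat1 u) + single_entry k k (- u) + single_entry l l (- u)"
    unfolding congr_mat1 using assms False by (auto simp: single_entry_def fun_eq_iff)
  ultimately show ?thesis by simp
qed

lemma cone_single_entry_pair_sa:
  assumes "k < n" "l < n" "s \<i> w \<in> skew"
  shows "single_entry k l w + single_entry l k (- w) \<in> C n"
proof (cases "k = l")
  case True
  then show ?thesis using cone_zero assms by (simp add: single_entry_add[symmetric])
next
  case False
  let ?X = "\<lambda>(i::nat) (b::nat). (if b = k then (1::complex) else 0) + (if b = l then \<i> else 0)"
  have minus_iw: "mat1 (- s \<i> w) \<in> C 1" and iw: "mat1 (s \<i> w) \<in> C 1"
    using assms by (auto simp: skew_def)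
  have "congr s 1 n ?X (mat1 (- s \<i> w)) \<in> C n" using minus_iw assms by (intro cone_congr) auto
  with cone_single_entry_diag[OF assms(1) iw] cone_single_entry_diag[OF assms(2) iw]
  have "congr s 1 n ?X (mat1 (- s \<i> w)) + single_entry k k (s \<i> w) + single_entry l l (s \<i> w) \<in> C n"
    using assms by (intro cone_add) auto
  moreover have "single_entry k l w + single_entry l k (- w) =
      congr s 1 n ?X (mat1 (- s \<i> w)) + single_entry k k (s \<i> w) + single_entry l l (s \<i> w)"
    unfolding congr_mat1 using assms False
    by (auto simp: single_entry_def fun_eq_iff vs.scale_minus_right vs.scale_scale)
  ultimately show ?thesis by simp
qed

lemma scale_half_double: "s (complex_of_real (1/2)) (x + x) = x"
proof -
  have "s (complex_of_real (1/2)) (x + x) = s (complex_of_real (1/2) + complex_of_real (1/2)) x"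
    by (simp only: vs.scale_right_distrib vs.scale_left_distrib)
  also have "complex_of_real (1/2) + complex_of_real (1/2) = 1" by simp
  finally show ?thesis by (simp only: vs.scale_one)
qed

lemma scale_half_split:
  "a = s (complex_of_real (1/2)) (a + b) + s (complex_of_real (1/2)) (a - b)"
  "b = s (complex_of_real (1/2)) (a + b) - s (complex_of_real (1/2)) (a - b)"
proof -
  have "s (complex_of_real (1/2)) (a + b) + s (complex_of_real (1/2)) (a - b) = s (complex_of_real (1/2)) (a + a)"
    by (simp only: vs.scale_right_distrib[symmetric]) (simp add: algebra_simps)
  then show "a = s (complex_of_real (1/2)) (a + b) + s (complex_of_real (1/2)) (a - b)"
    by (simp only: scale_half_double)
  have "s (complex_of_real (1/2)) (a + b) - s (complex_of_real (1/2)) (a - b) = s (complex_of_real (1/2)) (b + b)"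
    by (simp only: vs.scale_right_diff_distrib[symmetric]) (simp add: algebra_simps)
  then show "b = s (complex_of_real (1/2)) (a + b) - s (complex_of_real (1/2)) (a - b)"
    by (simp only: scale_half_double)
qed

text \<open>A pair (a, b) stands for a + b*; these are the pairs that represent 0.\<close>
definition null_pairs where
  "null_pairs = {p. fst p + snd p \<in> skew \<and> s \<i> (fst p - snd p) \<in> skew}"

lemma null_pairs_iff_mat1:
  "(a, b) \<in> null_pairs \<longleftrightarrow> (\<forall>c\<in>{1, -1, \<i>, -\<i>}. mat1 (s c a + s (cnj c) b) \<in> C 1)"
proof -
  have "s (-1) a + s (-1) b = - (a + b)" "s \<i> a + s (-\<i>) b = s \<i> (a - b)"
    "s (-\<i>) a + s \<i> b = - s \<i> (a - b)"
    by (simp_all add: vs.scale_minus_left vs.scale_right_diff_distrib vs.scale_right_distrib)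
  then show ?thesis by (auto simp: null_pairs_def skew_def)
qed

lemma cone_single_entry_null_pair:
  assumes "k < n" "l < n" "(a, b) \<in> null_pairs"
  shows "single_entry k l a + single_entry l k b \<in> C n"
proof -
  define u w where "u = s (complex_of_real (1/2)) (a + b)" and "w = s (complex_of_real (1/2)) (a - b)"
  have "u \<in> skew"
    unfolding u_def using assms(3) by (intro skew_scale_real) (simp add: null_pairs_def)
  moreover have "s \<i> w = s (complex_of_real (1/2)) (s \<i> (a - b))"
    by (simp add: w_def vs.scale_scale mult.commute)
  then have "s \<i> w \<in> skew"
    using assms(3) skew_scale_real unfolding null_pairs_def by (simp only: mem_Collect_eq fst_conv snd_conv)
  ultimately have "single_entry k l u + single_entry l k u + (single_entry k l w + single_entry l k (- w)) \<in> C n"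
    using assms by (intro cone_add cone_single_entry_pair_skew cone_single_entry_pair_sa) auto
  moreover have "a = u + w" "b = u + - w"
    unfolding u_def w_def diff_conv_add_uminus[symmetric] by (rule scale_half_split)+
  then have "single_entry k l a + single_entry l k b =
      single_entry k l u + single_entry l k u + (single_entry k l w + single_entry l k (- w))"
    by (simp only: single_entry_add add_ac)
  ultimately show ?thesis by simp
qed

lemma null_pairs_uminus: "p \<in> null_pairs \<Longrightarrow> - p \<in> null_pairs"
proof -
  assume "p \<in> null_pairs"
  then have "fst p + snd p \<in> skew" "s \<i> (fst p - snd p) \<in> skew"
    by (simp_all add: null_pairs_def)
  then have "- (fst p + snd p) \<in> skew" "- s \<i> (fst p - snd p) \<in> skew"
    by (blast intro: skew_uminus)+
  moreover have "fst (- p) + snd (- p) = - (fst p + snd p)"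
    "s \<i> (fst (- p) - snd (- p)) = - s \<i> (fst p - snd p)"
    by (simp_all add: vs.scale_right_diff_distrib)
  ultimately show "- p \<in> null_pairs"
    unfolding null_pairs_def by simp
qed

lemma null_pairs_swap: "(a, b) \<in> null_pairs \<Longrightarrow> (b, a) \<in> null_pairs"
proof -
  assume "(a, b) \<in> null_pairs"
  moreover have "s \<i> (b - a) = - s \<i> (a - b)"
    by (metis minus_diff_eq vs.scale_minus_right)
  ultimately show ?thesis by (auto simp: null_pairs_def add.commute skew_uminus)
qed

lemma scale_pair_sum_diff:
  "s c a + s (cnj c) b = s (complex_of_real (Re c)) (a + b) + s (complex_of_real (Im c)) (s \<i> (a - b))"
  "s \<i> (s c a - s (cnj c) b) =
     s (complex_of_real (Re c)) (s \<i> (a - b)) + s (complex_of_real (- Im c)) (a + b)"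
proof -
  define x y where "x = Re c" and "y = Im c"
  have c: "c = complex_of_real x + \<i> * complex_of_real y"
    by (simp add: x_def y_def complex_eq_iff)
  show "s c a + s (cnj c) b = s (complex_of_real (Re c)) (a + b) + s (complex_of_real (Im c)) (s \<i> (a - b))"
    and "s \<i> (s c a - s (cnj c) b) =
      s (complex_of_real (Re c)) (s \<i> (a - b)) + s (complex_of_real (- Im c)) (a + b)"
    by (simp_all add: c vs.scale_right_distrib vs.scale_left_distrib vs.scale_right_diff_distrib
        vs.scale_left_diff_distrib vs.scale_scale algebra_simps)
qed

lemma subspace_null_pairs: "module.subspace (pair_scale s) null_pairs"
proof -
  interpret pairs: vector_space "pair_scale s"
    by (rule vector_space_pair_scale[OF vs.vector_space_axioms])
  show ?thesis unfolding pairs.subspace_def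
  proof safe
    show "0 \<in> null_pairs" by (simp add: null_pairs_def skew_0)
  next
    fix x y assume "x \<in> null_pairs" "y \<in> null_pairs"
    moreover have "fst (x + y) + snd (x + y) = (fst x + snd x) + (fst y + snd y)"
      and "s \<i> (fst (x + y) - snd (x + y)) = s \<i> (fst x - snd x) + s \<i> (fst y - snd y)"
      by (simp_all add: algebra_simps vs.scale_right_distrib vs.scale_right_diff_distrib)
    ultimately show "x + y \<in> null_pairs"
      unfolding null_pairs_def mem_Collect_eq by (metis skew_add)
  next
    fix c x assume "x \<in> null_pairs"
    then show "pair_scale s c x \<in> null_pairs"
      unfolding null_pairs_def mem_Collect_eq fst_pair_scale snd_pair_scale scale_pair_sum_diff
      by (blast intro: skew_add skew_scale_real)
  qed
qed

lemma cone_plus_transpose_null: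
  assumes "n > 0" and "\<And>k l. N k l \<in> null_pairs" and "\<And>k l. \<not> (k < n \<and> l < n) \<Longrightarrow> N k l = 0"
  shows "plus_transpose N \<in> C n"
proof -
  have "(\<Sum>k<n. \<Sum>l<n. single_entry k l (fst (N k l)) + single_entry l k (snd (N k l))) \<in> C n"
    using assms(1,2) by (intro cone_sum cone_single_entry_null_pair) auto
  moreover have "(\<Sum>k<n. \<Sum>l<n. single_entry k l (fst (N k l)) + single_entry l k (snd (N k l))) =
      plus_transpose N"
    using assms(3) by (auto simp: sum_single_entry_pairs plus_transpose_def fun_eq_iff)
  ultimately show ?thesis by simp
qed

lemma cone_add_plus_transpose_null_iff:
  assumes "n > 0" and "\<And>k l. N k l \<in> null_pairs" and "\<And>k l. \<not> (k < n \<and> l < n) \<Longrightarrow> N k l = 0"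
  shows "A + plus_transpose N \<in> C n \<longleftrightarrow> A \<in> C n"
proof (rule cone_add_lineal_iff)
  have "plus_transpose (- N) \<in> C n"
    using assms by (intro cone_plus_transpose_null) (auto intro: null_pairs_uminus)
  then show "- plus_transpose N \<in> C n"
    by (simp add: plus_transpose_def fun_Compl_def add.commute)
qed (use assms cone_plus_transpose_null in auto)

definition sa where "sa = {A 0 0 | A. A \<in> sa_part s C 1}"

lemma sa_iff_skew: "x \<in> sa \<longleftrightarrow> s \<i> x \<in> skew"
proof
  assume "x \<in> sa"
  then obtain A where A: "A \<in> sa_part s C 1" "x = A 0 0" by (auto simp: sa_def)
  have "smat s (-\<i>) A \<in> C 1" "smat s \<i> A \<in> C 1"
    using A(1) by (auto simp: sa_part_def mem_sset_iff[OF vs.vector_space_axioms])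
  moreover have "A = mat1 x"
    using calculation(1) cone_subset_mats[of 1] A(2) by (auto simp: mats_def smat_def single_entry_def fun_eq_iff)
  ultimately show "s \<i> x \<in> skew"
    by (simp add: smat_single_entry[OF vs.vector_space_axioms] skew_def vs.scale_minus_left)
next
  assume "s \<i> x \<in> skew"
  then have "mat1 x \<in> sa_part s C 1"
    by (simp add: sa_part_def mem_sset_iff[OF vs.vector_space_axioms] smat_single_entry[OF vs.vector_space_axioms] skew_def
        vs.scale_minus_left)
  then show "x \<in> sa"
    unfolding sa_def by (intro CollectI exI[of _ "mat1 x"]) (simp add: single_entry_def)
qed

lemma sa_add: "x \<in> sa \<Longrightarrow> y \<in> sa \<Longrightarrow> x + y \<in> sa"
  by (simp add: sa_iff_skew vs.scale_right_distrib skew_add)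

lemma sa_scale_real: "x \<in> sa \<Longrightarrow> s (complex_of_real t) x \<in> sa"
  using skew_scale_real[of "s \<i> x" t] by (simp add: sa_iff_skew vs.scale_scale mult.commute)

lemma sa_in_V: "x \<in> sa \<Longrightarrow> x \<in> V"
proof -
  assume "x \<in> sa"
  then have "s \<i> x \<in> V" by (auto simp: sa_iff_skew skew_def intro: mat1_cone_in_V)
  then have "s (-\<i>) (s \<i> x) \<in> V" using subspace_V vs.subspace_scale by blast
  then show "x \<in> V" by (simp add: vs.scale_scale)
qed

lemma span_sa: "vs.span sa = {h + s \<i> k | h k. h \<in> sa \<and> k \<in> sa}"
proof (rule vs.span_unique)
  have "0 \<in> sa" using skew_0 by (simp add: sa_iff_skew)
  then show "sa \<subseteq> {h + s \<i> k | h k. h \<in> sa \<and> k \<in> sa}" and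
    "vs.subspace {h + s \<i> k | h k. h \<in> sa \<and> k \<in> sa}"
    unfolding vs.subspace_def
  proof safe
    fix h k h' k' assume "h \<in> sa" "k \<in> sa" "h' \<in> sa" "k' \<in> sa"
    then show "\<exists>h'' k''. h + s \<i> k + (h' + s \<i> k') = h'' + s \<i> k'' \<and> h'' \<in> sa \<and> k'' \<in> sa"
      by (intro exI[of _ "h + h'"] exI[of _ "k + k'"]) (auto simp: sa_add vs.scale_right_distrib)
  next
    fix c h k assume hk: "h \<in> sa" "k \<in> sa"
    let ?a = "complex_of_real (Re c)" and ?b = "complex_of_real (Im c)"
    have "s c (h + s \<i> k) = s (?a + \<i> * ?b) h + s ((?a + \<i> * ?b) * \<i>) k"
      by (subst complex_eq[of c]) (simp add: vs.scale_right_distrib vs.scale_scale)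
    also have "\<dots> = (s ?a h + s (- ?b) k) + s \<i> (s ?b h + s ?a k)"
      by (simp add: vs.scale_right_distrib vs.scale_left_distrib vs.scale_scale algebra_simps)
    finally show "\<exists>h' k'. s c (h + s \<i> k) = h' + s \<i> k' \<and> h' \<in> sa \<and> k' \<in> sa"
      using hk by (intro exI[of _ "s ?a h + s (- ?b) k"] exI[of _ "s ?b h + s ?a k"])
        (auto intro!: sa_add sa_scale_real simp del: of_real_minus simp add: of_real_minus[symmetric])
  qed (force+)
next
  fix T assume "sa \<subseteq> T" "vs.subspace T"
  then show "{h + s \<i> k | h k. h \<in> sa \<and> k \<in> sa} \<subseteq> T"
    by (auto intro!: vs.subspace_add vs.subspace_scale)
qed

end

section \<open>Uniqueness of the *-closure\<close>

locale star_closure_of = Z: accretive_space sZ UNIV CZ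
  for sZ :: "complex \<Rightarrow> 'z::ab_group_add \<Rightarrow> 'z" and CZ +
  fixes sV :: "complex \<Rightarrow> 'v::ab_group_add \<Rightarrow> 'v" and V CV and phi :: "'z \<Rightarrow> 'v"
  assumes star_closure: "star_closure sZ UNIV CZ sV V CV phi"
begin

sublocale V: accretive_space sV V CV
  using star_closure by (simp add: star_closure_def accretive_space_def)

text \<open>Any involution witnessing the *-closure property will do.\<close>
definition adj :: "'v \<Rightarrow> 'v" where
  "adj = (SOME star. conj_linear_on sV V star \<and> (\<forall>A\<in>sa_part sV CV 1. star (A 0 0) = A 0 0) \<and>
            V = {phi a + star (phi b) | a b. a \<in> UNIV \<and> b \<in> UNIV})"

lemma adj: "conj_linear_on sV V adj \<and> (\<forall>A\<in>sa_part sV CV 1. adj (A 0 0) = A 0 0) \<and>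
    V = {phi a + adj (phi b) | a b. a \<in> UNIV \<and> b \<in> UNIV}"
proof -
  have "\<exists>star. conj_linear_on sV V star \<and> (\<forall>A\<in>sa_part sV CV 1. star (A 0 0) = A 0 0) \<and>
      V = {phi a + star (phi b) | a b. a \<in> UNIV \<and> b \<in> UNIV}"
    using star_closure by (simp add: star_closure_def)
  from someI_ex[OF this] show ?thesis unfolding adj_def .
qed

lemma adj_add: "x \<in> V \<Longrightarrow> y \<in> V \<Longrightarrow> adj (x + y) = adj x + adj y"
  using adj by (simp add: conj_linear_on_def)

lemma adj_scale: "x \<in> V \<Longrightarrow> adj (sV c x) = sV (cnj c) (adj x)"
  using adj by (simp add: conj_linear_on_def)

lemma adj_sa: "x \<in> V.sa \<Longrightarrow> adj x = x"
  using adj by (auto simp: V.sa_def)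

lemma V_eq: "V = {phi a + adj (phi b) | a b. True}"
  using adj by simp

lemma phi_add: "phi (a + b) = phi a + phi b"
  using star_closure by (simp add: star_closure_def rc_embedding_def linear_on_def)

lemma phi_scale: "phi (sZ c a) = sV c (phi a)"
  using star_closure by (simp add: star_closure_def rc_embedding_def linear_on_def)

lemma phi_in_V: "phi a \<in> V"
  using star_closure unfolding star_closure_def rc_embedding_def by blast

lemma phi_0: "phi 0 = 0"
  using phi_add[of 0 0] by simp

lemma phi_cone_iff: "n > 0 \<Longrightarrow> A \<in> mats n UNIV \<Longrightarrow> map_mat phi A \<in> CV n \<longleftrightarrow> A \<in> CZ n"
  using star_closure by (auto simp: star_closure_def rc_embedding_def real_cp_def)

lemma adj_0: "adj 0 = 0"
  using adj_add[of 0 0] V.subspace_V V.vs.subspace_0 by simp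

lemma adj_null_pair:
  assumes "x \<in> V"
  shows "(adj x, - x) \<in> V.null_pairs"
proof -
  have "V = V.vs.span V.sa"
    using star_closure by (simp add: star_closure_def self_adjoint_def V.sa_def)
  then obtain h k where hk: "h \<in> V.sa" "k \<in> V.sa" and x: "x = h + sV \<i> k"
    using assms V.span_sa by auto
  have "sV \<i> k \<in> V" using hk V.sa_in_V V.subspace_V V.vs.subspace_scale by blast
  then have "adj x = h + sV (- \<i>) k"
    using hk V.sa_in_V by (simp add: x adj_add adj_scale adj_sa)
  then have "fst (adj x, - x) + snd (adj x, - x) = - (sV \<i> k + sV \<i> k)"
    and "sV \<i> (fst (adj x, - x) - snd (adj x, - x)) = sV \<i> h + sV \<i> h"
    by (simp_all add: x V.vs.scale_minus_left V.vs.scale_right_distrib)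
  moreover have "- (sV \<i> k + sV \<i> k) \<in> V.skew" "sV \<i> h + sV \<i> h \<in> V.skew"
    using hk by (simp_all only: V.sa_iff_skew V.skew_add V.skew_uminus)
  ultimately show ?thesis
    unfolding V.null_pairs_def by simp
qed

lemma cone_iff_plus_transpose:
  assumes "n > 0" and "\<And>k l. \<not> (k < n \<and> l < n) \<Longrightarrow> A k l = 0 \<and> B k l = 0"
  shows "(\<lambda>k l. phi (A k l) + adj (phi (B k l))) \<in> CV n \<longleftrightarrow> (\<lambda>k l. A k l + B l k) \<in> CZ n"
proof -
  define N where "N = (\<lambda>k l. (adj (phi (B k l)), - phi (B k l)))"
  have "(\<lambda>k l. phi (A k l) + adj (phi (B k l))) = map_mat phi (\<lambda>k l. A k l + B l k) + plus_transpose N"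
    by (simp add: N_def plus_transpose_def map_mat_def fun_eq_iff phi_add)
  moreover have "map_mat phi (\<lambda>k l. A k l + B l k) + plus_transpose N \<in> CV n \<longleftrightarrow>
      map_mat phi (\<lambda>k l. A k l + B l k) \<in> CV n"
    using assms by (intro V.cone_add_plus_transpose_null_iff)
      (auto simp: N_def adj_null_pair phi_in_V phi_0 adj_0 zero_prod_def)
  moreover have "(\<lambda>k l. A k l + B l k) \<in> mats n UNIV"
    using assms(2) by (auto simp: mats_def)
  ultimately show ?thesis
    using phi_cone_iff[OF assms(1)] by simp
qed

lemma mat1_cone_iff: "mat1 (phi a + adj (phi b)) \<in> CV 1 \<longleftrightarrow> mat1 (a + b) \<in> CZ 1"
proof -
  have "(\<lambda>k l. phi (mat1 a k l) + adj (phi (mat1 b k l))) = mat1 (phi a + adj (phi b))"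
    by (auto simp: fun_eq_iff single_entry_def phi_0 adj_0)
  moreover have "(\<lambda>k l. mat1 a k l + mat1 b l k) = mat1 (a + b)"
    by (auto simp: fun_eq_iff single_entry_def)
  moreover have "\<And>k l. \<not> (k < 1 \<and> l < 1) \<Longrightarrow> mat1 a k l = 0 \<and> mat1 b k l = 0"
    by (auto simp: single_entry_def)
  ultimately show ?thesis
    using cone_iff_plus_transpose[of 1 "mat1 a" "mat1 b"] by simp
qed

lemma scale_rep: "sV c (phi a + adj (phi b)) = phi (sZ c a) + adj (phi (sZ (cnj c) b))"
  using adj_scale[OF phi_in_V, of "cnj c" b] by (simp add: phi_scale V.vs.scale_right_distrib)

lemma rep_eq_0_iff: "phi a + adj (phi b) = 0 \<longleftrightarrow> (a, b) \<in> Z.null_pairs"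
  unfolding V.proper_mat1[of "phi a + adj (phi b)"] Z.null_pairs_iff_mat1 scale_rep mat1_cone_iff ..

lemma rep_in_V: "phi a + adj (phi b) \<in> V"
  using V_eq by auto

lemma rep_add: "(phi a + adj (phi b)) + (phi a' + adj (phi b')) = phi (a + a') + adj (phi (b + b'))"
  by (simp add: phi_add adj_add[OF phi_in_V phi_in_V] algebra_simps)

lemma rep_diff: "(phi a + adj (phi b)) - (phi a' + adj (phi b')) = phi (a - a') + adj (phi (b - b'))"
  using rep_add[of "a - a'" "b - b'" a' b'] by (simp add: algebra_simps)

lemma rep_eq_iff: "phi a + adj (phi b) = phi a' + adj (phi b') \<longleftrightarrow> (a - a', b - b') \<in> Z.null_pairs"
  by (subst right_minus_eq[symmetric]) (simp only: rep_diff rep_eq_0_iff)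

definition coords :: "'v \<Rightarrow> 'z \<times> 'z" where
  "coords x = (SOME p. x = phi (fst p) + adj (phi (snd p)))"

lemma coords: "x \<in> V \<Longrightarrow> x = phi (fst (coords x)) + adj (phi (snd (coords x)))"
  unfolding coords_def by (rule someI_ex) (use V_eq in auto)

end

locale two_star_closures =
  V: star_closure_of sZ CZ sV V CV phi + W: star_closure_of sZ CZ sW W CW psi
  for sZ :: "complex \<Rightarrow> 'z::ab_group_add \<Rightarrow> 'z" and CZ
    and sV :: "complex \<Rightarrow> 'v::ab_group_add \<Rightarrow> 'v" and V CV phi
    and sW :: "complex \<Rightarrow> 'w::ab_group_add \<Rightarrow> 'w" and W CW psi
begin

definition j :: "'v \<Rightarrow> 'w" where
  "j x = psi (fst (V.coords x)) + W.adj (psi (snd (V.coords x)))"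

lemma j_rep: "j (phi a + V.adj (phi b)) = psi a + W.adj (psi b)"
proof -
  let ?x = "phi a + V.adj (phi b)"
  have "?x = phi (fst (V.coords ?x)) + V.adj (phi (snd (V.coords ?x)))"
    using V.coords V.rep_in_V by blast
  then have "(fst (V.coords ?x) - a, snd (V.coords ?x) - b) \<in> V.Z.null_pairs"
    using V.rep_eq_iff by metis
  then show ?thesis unfolding j_def by (simp only: W.rep_eq_iff)
qed

lemma mats_rep:
  assumes "X \<in> mats n V"
  obtains A B where "\<And>k l. \<not> (k < n \<and> l < n) \<Longrightarrow> A k l = 0 \<and> B k l = 0"
    and "X = (\<lambda>k l. phi (A k l) + V.adj (phi (B k l)))"
proof
  define A where "A = (\<lambda>k l. if k < n \<and> l < n then fst (V.coords (X k l)) else 0)"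
  define B where "B = (\<lambda>k l. if k < n \<and> l < n then snd (V.coords (X k l)) else 0)"
  show "A k l = 0 \<and> B k l = 0" if "\<not> (k < n \<and> l < n)" for k l
    using that by (auto simp: A_def B_def)
  show "X = (\<lambda>k l. phi (A k l) + V.adj (phi (B k l)))"
    using assms V.coords by (auto simp: A_def B_def mats_def fun_eq_iff V.phi_0 V.adj_0)
qed

lemma j_linear: "linear_on sV sW V j"
  unfolding linear_on_def
proof safe
  fix x y assume "x \<in> V" "y \<in> V"
  then obtain a b a' b' where "x = phi a + V.adj (phi b)" "y = phi a' + V.adj (phi b')"
    using V.V_eq by blast
  then show "j (x + y) = j x + j y" by (simp add: V.rep_add W.rep_add[symmetric] j_rep)
next
  fix c x assume "x \<in> V"
  then obtain a b where "x = phi a + V.adj (phi b)" using V.V_eq by blast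
  then show "j (sV c x) = sW c (j x)" by (simp add: V.scale_rep W.scale_rep j_rep)
qed

lemma j_image: "j ` V = W"
proof
  show "j ` V \<subseteq> W"
  proof
    fix w assume "w \<in> j ` V"
    then obtain x where "x \<in> V" "w = j x" by blast
    moreover obtain a b where "x = phi a + V.adj (phi b)" using V.V_eq \<open>x \<in> V\<close> by blast
    ultimately show "w \<in> W" using W.rep_in_V by (simp add: j_rep)
  qed
  show "W \<subseteq> j ` V"
  proof
    fix w assume "w \<in> W"
    then obtain a b where "w = psi a + W.adj (psi b)" using W.V_eq by blast
    then show "w \<in> j ` V" using V.rep_in_V j_rep by (metis image_eqI)
  qed
qed

lemma j_inj: "inj_on j V"
proof (rule inj_onI)
  fix x y assume "x \<in> V" "y \<in> V" "j x = j y"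
  moreover obtain a b a' b' where "x = phi a + V.adj (phi b)" "y = phi a' + V.adj (phi b')"
    using V.V_eq \<open>x \<in> V\<close> \<open>y \<in> V\<close> by blast
  ultimately show "x = y" by (simp add: j_rep W.rep_eq_iff V.rep_eq_iff)
qed

lemma j_cone_iff: "n > 0 \<Longrightarrow> X \<in> mats n V \<Longrightarrow> map_mat j X \<in> CW n \<longleftrightarrow> X \<in> CV n"
proof -
  assume "n > 0" and X_mats: "X \<in> mats n V"
  obtain A B where out: "\<And>k l. \<not> (k < n \<and> l < n) \<Longrightarrow> A k l = 0 \<and> B k l = 0"
    and X: "X = (\<lambda>k l. phi (A k l) + V.adj (phi (B k l)))"
    using mats_rep[OF X_mats] by blast
  have "map_mat j X = (\<lambda>k l. psi (A k l) + W.adj (psi (B k l)))"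
    by (simp add: X map_mat_def j_rep)
  then show ?thesis
    using V.cone_iff_plus_transpose[OF \<open>n > 0\<close> out] W.cone_iff_plus_transpose[OF \<open>n > 0\<close> out] X
    by simp
qed

lemma j_isomorphism: "rc_isomorphism sV V CV sW W CW j"
  unfolding rc_isomorphism_def rc_embedding_def real_cp_def
  using j_linear j_image j_inj j_cone_iff V.V.cone_subset_mats by blast

end

section \<open>Existence of a *-closure\<close>

text \<open>The quotient (Z \<times> Z)/null_pairs is realised as the range of a linear projection P
with kernel null_pairs.\<close>
locale star_closure_construction = accretive_space s UNIV C
  for s :: "complex \<Rightarrow> 'z::ab_group_add \<Rightarrow> 'z" and C +
  fixes P :: "'z \<times> 'z \<Rightarrow> 'z \<times> 'z"
  assumes linear_P: "Vector_Spaces.linear (pair_scale s) (pair_scale s) P"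
    and minus_P_null: "\<And>x. x - P x \<in> null_pairs"
    and P_null: "\<And>x. x \<in> null_pairs \<Longrightarrow> P x = 0"
begin

sublocale pairs: vector_space "pair_scale s"
  by (rule vector_space_pair_scale[OF vs.vector_space_axioms])

sublocale pairs2: vector_space_pair "pair_scale s" "pair_scale s" ..

lemma P_add: "P (x + y) = P x + P y"
  using linear_P by (rule pairs2.linear_add)

lemma P_scale: "P (pair_scale s c x) = pair_scale s c (P x)"
  using linear_P by (rule pairs2.linear_scale)

lemma P_diff: "P (x - y) = P x - P y"
  using linear_P by (rule pairs2.linear_diff)

lemma P_0: "P 0 = 0"
  using linear_P by (rule pairs2.linear_0)

lemma P_idem: "P (P x) = P x"
  using P_null[OF minus_P_null[of x]] by (simp add: P_diff)

definition qspace where "qspace = range P"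

definition qcone where "qcone n = {X \<in> mats n qspace. plus_transpose X \<in> C n}"

definition emb where "emb a = P (a, 0)"

definition star where "star x = P (snd x, fst x)"

lemma subspace_qspace: "pairs.subspace qspace"
  unfolding qspace_def by (rule pairs2.linear_subspace_image[OF linear_P pairs.subspace_UNIV])

lemma P_qspace: "x \<in> qspace \<Longrightarrow> P x = x"
  unfolding qspace_def using P_idem by auto

lemma P_in_qspace: "P x \<in> qspace"
  unfolding qspace_def by simp

lemma null_pairs_qspace: "x \<in> null_pairs \<Longrightarrow> x \<in> qspace \<Longrightarrow> x = 0"
  using P_null P_qspace by metis

lemma mat1_qcone_iff: "mat1 x \<in> qcone 1 \<longleftrightarrow> x \<in> qspace \<and> mat1 (fst x + snd x) \<in> C 1"
proof -
  have "mat1 x \<in> mats 1 qspace \<longleftrightarrow> x \<in> qspace"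
    using pairs.subspace_0[OF subspace_qspace] by (auto simp: mats_def single_entry_def)
  moreover have "plus_transpose (mat1 x) = mat1 (fst x + snd x)"
    by (auto simp: plus_transpose_def single_entry_def fun_eq_iff)
  ultimately show ?thesis by (simp add: qcone_def)
qed

lemma qcone_add: "n > 0 \<Longrightarrow> A \<in> qcone n \<Longrightarrow> B \<in> qcone n \<Longrightarrow> (\<lambda>i j. A i j + B i j) \<in> qcone n"
proof -
  assume "n > 0" "A \<in> qcone n" "B \<in> qcone n"
  moreover have "plus_transpose (\<lambda>i j. A i j + B i j) = plus_transpose A + plus_transpose B"
    by (simp add: plus_transpose_def fun_eq_iff algebra_simps)
  ultimately show ?thesis
    using pairs.subspace_add[OF subspace_qspace] cone_add by (auto simp: qcone_def mats_def)
qed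

lemma qcone_scale:
  "n > 0 \<Longrightarrow> t \<ge> 0 \<Longrightarrow> A \<in> qcone n \<Longrightarrow> smat (pair_scale s) (complex_of_real t) A \<in> qcone n"
proof -
  assume "n > 0" "t \<ge> 0" "A \<in> qcone n"
  moreover have "plus_transpose (smat (pair_scale s) (complex_of_real t) A) =
      smat s (complex_of_real t) (plus_transpose A)"
    by (simp add: plus_transpose_def fun_eq_iff smat_def vs.scale_right_distrib)
  ultimately show ?thesis
    using pairs.subspace_scale[OF subspace_qspace] cone_scale
    by (auto simp: qcone_def mats_def smat_def)
qed

lemma plus_transpose_congr:
  "plus_transpose (congr (pair_scale s) n k X A) = congr s n k X (plus_transpose A)"
proof (intro ext)
  fix a b
  have "(\<Sum>i<n. \<Sum>j<n. s (X i b * cnj (X j a)) (snd (A i j))) =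
      (\<Sum>i<n. \<Sum>j<n. s (cnj (X i a) * X j b) (snd (A j i)))"
    by (rule trans[OF sum.swap]) (simp add: mult.commute)
  then show "plus_transpose (congr (pair_scale s) n k X A) a b = congr s n k X (plus_transpose A) a b"
    by (simp add: plus_transpose_def congr_def fst_sum snd_sum vs.scale_right_distrib sum.distrib)
qed

lemma qcone_congr: "n > 0 \<Longrightarrow> k > 0 \<Longrightarrow> A \<in> qcone n \<Longrightarrow> congr (pair_scale s) n k X A \<in> qcone k"
proof -
  assume "n > 0" "k > 0" "A \<in> qcone n"
  then have "plus_transpose (congr (pair_scale s) n k X A) \<in> C k"
    unfolding plus_transpose_congr by (auto simp: qcone_def intro: cone_congr)
  moreover have "congr (pair_scale s) n k X A \<in> mats k qspace"
    using \<open>A \<in> qcone n\<close> by (auto simp: qcone_def mats_def congr_def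
        intro!: pairs.subspace_sum[OF subspace_qspace] pairs.subspace_scale[OF subspace_qspace])
  ultimately show ?thesis by (simp add: qcone_def)
qed

lemma proper_qcone: "C_proper (pair_scale s) qcone"
  unfolding C_proper_def
proof (intro equalityI subsetI)
  fix A assume A: "A \<in> qcone 1 \<inter> sset (pair_scale s) (- 1) (qcone 1) \<inter>
      sset (pair_scale s) \<i> (qcone 1) \<inter> sset (pair_scale s) (- \<i>) (qcone 1)"
  define x where "x = A 0 0"
  have x: "A = mat1 x" using A mats_1_eq_mat1 by (auto simp: qcone_def x_def)
  have "\<forall>c\<in>{1, -1, \<i>, -\<i>}. mat1 (pair_scale s c x) \<in> qcone 1"
    using A by (simp add: x mem_sset_iff[OF pairs.vector_space_axioms]
        smat_single_entry[OF pairs.vector_space_axioms])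
  then have "x \<in> qspace" "(fst x, snd x) \<in> null_pairs"
    unfolding null_pairs_iff_mat1 mat1_qcone_iff by auto
  then have "x = 0" using null_pairs_qspace by simp
  then show "A \<in> {\<lambda>i j. 0}" by (simp add: x zero_fun_def)
next
  have "(\<lambda>i j. 0) \<in> qcone 1"
    using mat1_qcone_iff[of 0] pairs.subspace_0[OF subspace_qspace] cone_zero[of 1]
    by (simp add: zero_fun_def single_entry_def)
  then show "A \<in> qcone 1 \<inter> sset (pair_scale s) (- 1) (qcone 1) \<inter>
      sset (pair_scale s) \<i> (qcone 1) \<inter> sset (pair_scale s) (- \<i>) (qcone 1)"
    if "A \<in> {\<lambda>i j. 0}" for A
    using that by (simp add: mem_sset_iff[OF pairs.vector_space_axioms] smat_def)
qed

lemma amovs_qspace: "amovs (pair_scale s) qspace qcone"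
  unfolding amovs_def matrix_cone_def is_cone_def
  using pairs.vector_space_axioms subspace_qspace qcone_add qcone_scale qcone_congr proper_qcone
  by (auto simp: qcone_def)

sublocale Q: accretive_space "pair_scale s" qspace qcone
  using amovs_qspace by (simp add: accretive_space_def)

lemma pair_scale_qspace_iff: "c \<noteq> 0 \<Longrightarrow> pair_scale s c x \<in> qspace \<longleftrightarrow> x \<in> qspace"
  using pairs.subspace_scale[OF subspace_qspace, of "pair_scale s c x" "inverse c"]
    pairs.subspace_scale[OF subspace_qspace, of x c]
  by auto

lemma Q_sa_iff: "x \<in> Q.sa \<longleftrightarrow> x \<in> qspace \<and> s \<i> (fst x - snd x) \<in> skew"
proof -
  have sum_eqs: "fst (pair_scale s \<i> x) + snd (pair_scale s \<i> x) = s \<i> (fst x - snd x)"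
    "fst (- pair_scale s \<i> x) + snd (- pair_scale s \<i> x) = - s \<i> (fst x - snd x)"
    by (simp_all add: vs.scale_right_diff_distrib)
  have qspace_iffs: "pair_scale s \<i> x \<in> qspace \<longleftrightarrow> x \<in> qspace"
    "- pair_scale s \<i> x \<in> qspace \<longleftrightarrow> x \<in> qspace"
    using pair_scale_qspace_iff[of \<i> x] pairs.subspace_neg[OF subspace_qspace, of "pair_scale s \<i> x"]
      pairs.subspace_neg[OF subspace_qspace, of "- pair_scale s \<i> x"]
    by auto
  show ?thesis
    unfolding Q.sa_iff_skew Q.skew_def skew_def mem_Collect_eq mat1_qcone_iff sum_eqs qspace_iffs
    by blast
qed

lemma P_diag_sa: "P (y, y) \<in> Q.sa"
proof -
  have "s \<i> (fst ((y, y) - P (y, y)) - snd ((y, y) - P (y, y))) \<in> skew"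
    using minus_P_null[of "(y, y)"] by (simp add: null_pairs_def)
  moreover have "s \<i> (fst ((y, y) - P (y, y)) - snd ((y, y) - P (y, y))) =
      - s \<i> (fst (P (y, y)) - snd (P (y, y)))"
    by (simp add: algebra_simps vs.scale_right_diff_distrib)
  ultimately show ?thesis
    using P_in_qspace skew_uminus by (fastforce simp: Q_sa_iff)
qed

lemma self_adjoint_qspace: "self_adjoint (pair_scale s) qspace qcone"
  unfolding self_adjoint_def Q.sa_def[symmetric]
proof
  show "pairs.span Q.sa \<subseteq> qspace"
    by (rule pairs.span_minimal) (use Q_sa_iff subspace_qspace in auto)
  show "qspace \<subseteq> pairs.span Q.sa"
  proof
    fix x assume x: "x \<in> qspace"
    define c d where "c = s (complex_of_real (1/2)) (fst x + snd x)"
      and "d = s (complex_of_real (1/2)) (fst x - snd x)"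
    define e where "e = s (- \<i>) d"
    have "pair_scale s \<i> (e, e) = (d, - d)"
      by (simp add: e_def pair_scale_def vs.scale_scale vs.scale_minus_left)
    moreover have "fst x = c + d" "snd x = c - d"
      unfolding c_def d_def by (rule scale_half_split)+
    ultimately have "x = (c, c) + pair_scale s \<i> (e, e)"
      by (simp add: prod_eq_iff)
    then have "x = P (c, c) + pair_scale s \<i> (P (e, e))"
      using P_qspace[OF x] by (simp only: P_add P_scale)
    then show "x \<in> pairs.span Q.sa"
      using pairs.span_add[OF pairs.span_base[OF P_diag_sa] pairs.span_scale[OF pairs.span_base[OF P_diag_sa]]]
      by simp
  qed
qed

lemma emb_0: "emb 0 = 0"
  using P_0 by (simp add: emb_def zero_prod_def)

lemma emb_add: "emb (a + b) = emb a + emb b"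
  by (simp add: emb_def P_add[symmetric])

lemma emb_scale: "emb (s c a) = pair_scale s c (emb a)"
  using P_scale[of c "(a, 0)"] by (simp add: emb_def pair_scale_def)

lemma emb_null: "emb a - (a, 0) \<in> null_pairs"
  using null_pairs_uminus[OF minus_P_null[of "(a, 0)"]] by (simp add: emb_def)

lemma emb_inj: "inj emb"
proof (rule injI)
  fix a b assume "emb a = emb b"
  then have "emb (a - b) = 0" using emb_add[of "a - b" b] by simp
  then have "(a - b, 0) \<in> null_pairs"
    using null_pairs_uminus[OF emb_null[of "a - b"]] by simp
  then have "a - b = 0" by (intro skew_proper) (simp_all add: null_pairs_def)
  then show "a = b" by simp
qed

lemma emb_cone_iff:
  assumes "n > 0" and "\<And>k l. \<not> (k < n \<and> l < n) \<Longrightarrow> A k l = 0"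
  shows "map_mat emb A \<in> qcone n \<longleftrightarrow> A \<in> C n"
proof -
  define N where "N = (\<lambda>k l. emb (A k l) - (A k l, 0))"
  have "plus_transpose (map_mat emb A) = A + plus_transpose N"
    by (simp add: N_def plus_transpose_def map_mat_def fun_eq_iff)
  moreover have "A + plus_transpose N \<in> C n \<longleftrightarrow> A \<in> C n"
    using assms by (intro cone_add_plus_transpose_null_iff) (auto simp: N_def emb_null emb_0 zero_prod_def)
  moreover have "map_mat emb A \<in> mats n qspace"
    using assms(2) P_0 by (auto simp: mats_def map_mat_def emb_def P_in_qspace zero_prod_def)
  ultimately show ?thesis by (simp add: qcone_def)
qed

lemma rc_embedding_emb: "rc_embedding s UNIV C (pair_scale s) qspace qcone emb"
  unfolding rc_embedding_def real_cp_def
proof (intro conjI allI impI ballI)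
  show "linear_on s (pair_scale s) UNIV emb"
    by (simp add: linear_on_def emb_add emb_scale)
  show "range emb \<subseteq> qspace"
    by (auto simp: emb_def P_in_qspace)
  show "inj emb" by (rule emb_inj)
  show "map_mat emb A \<in> qcone n" if "n > 0" "A \<in> C n" for n A
    using that emb_cone_iff[OF that(1)] cone_subset_mats[OF that(1)] by (auto simp: mats_def)
  show "A \<in> C n" if "n > 0" "A \<in> mats n UNIV" "map_mat emb A \<in> qcone n" for n A
    using that emb_cone_iff[OF that(1)] by (auto simp: mats_def)
qed

lemma star_add: "star (x + y) = star x + star y"
  by (simp add: star_def P_add[symmetric])

lemma star_scale: "star (pair_scale s c x) = pair_scale s (cnj c) (star x)"
  using P_scale[of "cnj c" "(snd x, fst x)"] by (simp add: star_def pair_scale_def)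

lemma star_sa: "x \<in> Q.sa \<Longrightarrow> star x = x"
proof -
  assume "x \<in> Q.sa"
  then have x: "x \<in> qspace" "s \<i> (fst x - snd x) \<in> skew" by (simp_all add: Q_sa_iff)
  define d where "d = (snd x, fst x) - x"
  have "fst d + snd d = 0" by (simp add: d_def)
  moreover have "s \<i> (fst d - snd d) = - (s \<i> (fst x - snd x) + s \<i> (fst x - snd x))"
    by (simp add: d_def algebra_simps vs.scale_right_diff_distrib)
  ultimately have "d \<in> null_pairs"
    using skew_0 skew_uminus[OF skew_add[OF x(2) x(2)]] by (simp add: null_pairs_def)
  then have "P (snd x, fst x) = P x"
    using P_null[of d] by (simp add: d_def P_diff)
  then show "star x = x" by (simp add: star_def P_qspace[OF x(1)])
qed

lemma star_emb: "star (emb b) = P (0, b)"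
proof -
  obtain u v where uv: "emb b - (b, 0) = (u, v)" by fastforce
  then have "(v, u) \<in> null_pairs" using emb_null null_pairs_swap by metis
  moreover have eq: "(snd (emb b), fst (emb b)) = (0, b) + (v, u)"
    using uv by (auto simp: prod_eq_iff)
  ultimately show ?thesis
    unfolding star_def eq P_add using P_null by simp
qed

lemma qspace_eq: "qspace = {emb a + star (emb b) | a b. a \<in> UNIV \<and> b \<in> UNIV}"
proof -
  have P_pair: "P (a, b) = emb a + star (emb b)" for a b
    using P_add[of "(a, 0)" "(0, b)"] star_emb[of b] by (simp add: emb_def)
  show ?thesis
  proof (intro equalityI subsetI)
    fix x assume "x \<in> qspace"
    then obtain a b where "x = P (a, b)" by (auto simp: qspace_def)
    then show "x \<in> {emb a + star (emb b) | a b. a \<in> UNIV \<and> b \<in> UNIV}" by (simp add: P_pair) blast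
  next
    fix x assume "x \<in> {emb a + star (emb b) | a b. a \<in> UNIV \<and> b \<in> UNIV}"
    then show "x \<in> qspace" by (auto simp: P_pair[symmetric] P_in_qspace)
  qed
qed

lemma star_closure_qspace: "star_closure s UNIV C (pair_scale s) qspace qcone emb"
proof -
  have "conj_linear_on (pair_scale s) qspace star"
    by (simp add: conj_linear_on_def star_add star_scale)
  moreover have "\<forall>A\<in>sa_part (pair_scale s) qcone 1. star (A 0 0) = A 0 0"
  proof
    fix A assume "A \<in> sa_part (pair_scale s) qcone 1"
    then have "A 0 0 \<in> Q.sa" unfolding Q.sa_def by blast
    then show "star (A 0 0) = A 0 0" by (rule star_sa)
  qed
  ultimately show ?thesis
    unfolding star_closure_def using amovs_qspace self_adjoint_qspace rc_embedding_emb qspace_eq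
    by blast
qed

end

lemma exists_star_closure:
  fixes s :: "complex \<Rightarrow> 'z::ab_group_add \<Rightarrow> 'z"
  assumes "amovs s UNIV C"
  shows "\<exists>(sV :: complex \<Rightarrow> 'z \<times> 'z \<Rightarrow> 'z \<times> 'z) V CV phi. star_closure s UNIV C sV V CV phi"
proof -
  interpret accretive_space s UNIV C using assms by (rule accretive_space.intro)
  obtain P where "Vector_Spaces.linear (pair_scale s) (pair_scale s) P"
    and "\<forall>x. x - P x \<in> null_pairs" and "\<forall>x\<in>null_pairs. P x = 0"
    using vector_space.exists_projection_along[OF vector_space_pair_scale[OF vs.vector_space_axioms]
        subspace_null_pairs] by blast
  then interpret star_closure_construction s C P
    using assms
    by (simp add: star_closure_construction_def star_closure_construction_axioms_def accretive_space_def)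
  show ?thesis using star_closure_qspace by blast
qed

lemma star_closures_isomorphic:
  assumes "amovs sZ UNIV CZ"
    and "star_closure sZ UNIV CZ sV V CV phi" and "star_closure sZ UNIV CZ sW W CW psi"
  shows "\<exists>j. rc_isomorphism sV V CV sW W CW j"
proof -
  interpret two_star_closures sZ CZ sV V CV phi sW W CW psi
    using assms by (simp add: two_star_closures_def star_closure_of_def star_closure_of_axioms_def
        accretive_space_def)
  show ?thesis using j_isomorphism by blast
qed

theorem theorem2p9:
  fixes sZ :: "complex \<Rightarrow> 'z::ab_group_add \<Rightarrow> 'z"
    and CZ :: "nat \<Rightarrow> (nat \<Rightarrow> nat \<Rightarrow> 'z) set"
  assumes "amovs sZ UNIV CZ"
  shows "(\<exists>(sV :: complex \<Rightarrow> 'z \<times> 'z \<Rightarrow> 'z \<times> 'z) V CV phi. star_closure sZ UNIV CZ sV V CV phi)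
    \<and> (\<forall>(sV :: complex \<Rightarrow> 'v::ab_group_add \<Rightarrow> 'v) V CV phi (sW :: complex \<Rightarrow> 'w::ab_group_add \<Rightarrow> 'w) W CW psi.
          star_closure sZ UNIV CZ sV V CV phi \<and> star_closure sZ UNIV CZ sW W CW psi \<longrightarrow>
          (\<exists>j. rc_isomorphism sV V CV sW W CW j))"
  using exists_star_closure[OF assms] star_closures_isomorphic[OF assms] by blast

end
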